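(* Let $(P_n)_{n\ge0}$ be the monic polynomials defined by $P_{-1}=0$, $P_0=1$, $xP_n=P_{n+1}+C_nP_{n-1}$, with $C_n=\tfrac14(1-(-1)^nq^{n/2})(1-(-1)^nq^{(n-1)/2})$ for every integer $n$ (so $C_0=0$). Define $a_n=(\alpha^2-1)\gamma_n$, $b_n=-\tfrac12\big(1-(-1)^nq^{n/2}\big)\big((-1)^n-q^{-(n-1)/2}\big)$, $c_n=b_{n+1}C_n-\alpha b_nC_{n-1}-(\alpha^2-1)\gamma_nC_n$, $d_n=(b_{n-1}C_n-\alpha b_nC_{n-1})C_{n-2}$. Then for all $n\ge1$, with the convention $P_j=0$ for $j<0$, $$\mathcal S_qP_n=\alpha_nP_n+b_nC_{n-1}P_{n-2},\qquad U_2\,\mathcal D_qP_n=a_nP_{n+1}+c_nP_{n-1}+d_nP_{n-3}.$$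
   Context: Fix $0<q<1$. With $x(s)=(q^s+q^{-s})/2$, for a complex polynomial $f$: $\mathcal D_qf(x(s))=\frac{f(x(s+1/2))-f(x(s-1/2))}{x(s+1/2)-x(s-1/2)}$, $\mathcal S_qf(x(s))=\frac{f(x(s+1/2))+f(x(s-1/2))}{2}$ (both polynomials). $\alpha=(q^{1/2}+q^{-1/2})/2$, $\alpha_n=(q^{n/2}+q^{-n/2})/2$, $\gamma_n=(q^{n/2}-q^{-n/2})/(q^{1/2}-q^{-1/2})$, $U_2(x)=(\alpha^2-1)(x^2-1)$. *)

theory Defs
  imports "HOL-Computational_Algebra.Polynomial" Complex_Main
begin

definition xq :: "real \<Rightarrow> real \<Rightarrow> real" where
  "xq q s = (q powr s + q powr (-s)) / 2"

text \<open>Divided-difference operator D_q: the unique polynomial g with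
  g(x(s)) = (f(x(s+1/2)) - f(x(s-1/2))) / (x(s+1/2) - x(s-1/2)) wherever the
  denominator is nonzero (for real s this is exactly s \<noteq> 0; the values x(s), s > 0,
  form an infinite set, so g is unique).\<close>
definition Dq :: "real \<Rightarrow> complex poly \<Rightarrow> complex poly" where
  "Dq q f = (THE g. \<forall>s::real. xq q (s + 1/2) \<noteq> xq q (s - 1/2) \<longrightarrow>
       poly g (complex_of_real (xq q s)) =
         (poly f (complex_of_real (xq q (s + 1/2))) - poly f (complex_of_real (xq q (s - 1/2))))
         / complex_of_real (xq q (s + 1/2) - xq q (s - 1/2)))"

definition Sq :: "real \<Rightarrow> complex poly \<Rightarrow> complex poly" where
  "Sq q f = (THE g. \<forall>s::real.
       poly g (complex_of_real (xq q s)) =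
         (poly f (complex_of_real (xq q (s + 1/2))) + poly f (complex_of_real (xq q (s - 1/2)))) / 2)"

definition alpha :: "real \<Rightarrow> real" where
  "alpha q = (q powr (1/2) + q powr (-1/2)) / 2"

definition alphan :: "real \<Rightarrow> int \<Rightarrow> real" where
  "alphan q n = (q powr (real_of_int n / 2) + q powr (- real_of_int n / 2)) / 2"

definition gamman :: "real \<Rightarrow> int \<Rightarrow> real" where
  "gamman q n = (q powr (real_of_int n / 2) - q powr (- real_of_int n / 2))
                / (q powr (1/2) - q powr (-1/2))"

definition U2 :: "real \<Rightarrow> complex poly" where
  "U2 q = smult (complex_of_real ((alpha q)\<^sup>2 - 1)) [:-1, 0, 1:]"

definition Cn :: "real \<Rightarrow> int \<Rightarrow> real" where
  "Cn q n = (1/4) * (1 - ((-1::real) powi n) * q powr (real_of_int n / 2))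
                  * (1 - ((-1::real) powi n) * q powr ((real_of_int n - 1) / 2))"

text \<open>Monic polynomials: P_0 = 1, P_1 = x (since C_0 P_{-1} = 0),
  P_{n+2} = x P_{n+1} - C_{n+1} P_n.\<close>
fun Pn :: "real \<Rightarrow> nat \<Rightarrow> complex poly" where
  "Pn q 0 = 1"
| "Pn q (Suc 0) = [:0, 1:]"
| "Pn q (Suc (Suc n)) = [:0, 1:] * Pn q (Suc n) - smult (complex_of_real (Cn q (int n + 1))) (Pn q n)"

definition P :: "real \<Rightarrow> int \<Rightarrow> complex poly" where
  "P q j = (if j < 0 then 0 else Pn q (nat j))"

definition an :: "real \<Rightarrow> int \<Rightarrow> real" where
  "an q n = ((alpha q)\<^sup>2 - 1) * gamman q n"

definition bn :: "real \<Rightarrow> int \<Rightarrow> real" where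
  "bn q n = - (1/2) * (1 - ((-1::real) powi n) * q powr (real_of_int n / 2))
                    * (((-1::real) powi n) - q powr (- (real_of_int n - 1) / 2))"

definition cn :: "real \<Rightarrow> int \<Rightarrow> real" where
  "cn q n = bn q (n + 1) * Cn q n - alpha q * bn q n * Cn q (n - 1)
            - ((alpha q)\<^sup>2 - 1) * gamman q n * Cn q n"

definition dn :: "real \<Rightarrow> int \<Rightarrow> real" where
  "dn q n = (bn q (n - 1) * Cn q n - alpha q * bn q n * Cn q (n - 1)) * Cn q (n - 2)"

end

theory Submission
  imports Defs
begin

text \<open>On the grid, x(s+1/2) + x(s-1/2) = 2 alpha x(s) and (x(s+1/2) - x(s-1/2))^2 = 4 U2(x(s)).
  These give the product rules S(x f) = alpha x S f + U2 D f and D(x f) = alpha x D f + S f.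
  Applied to the three-term recurrence x P_n = P_(n+1) + C_n P_(n-1), they express S P_(n+1) and
  U2 D P_(n+1) through S and U2 D of P_n and P_(n-1). The claimed expansions obey the same
  recurrences because of a handful of identities between the coefficients, which are Laurent
  polynomial identities in q^(1/2) and q^(n/2); induction from n = 0, 1 finishes the proof.\<close>

abbreviation xc :: "real \<Rightarrow> real \<Rightarrow> complex" where
  "xc q s \<equiv> complex_of_real (xq q s)"

lemma xq_powr: "xq q s = (q powr s + 1 / q powr s) / 2"
  by (simp add: xq_def powr_minus_divide)

lemma xq_half_shifts:
  "xq q (s + 1/2) = (q powr s * q powr (1/2) + 1 / (q powr s * q powr (1/2))) / 2"
  "xq q (s - 1/2) = (q powr s / q powr (1/2) + q powr (1/2) / q powr s) / 2"
  unfolding xq_def powr_add powr_diff powr_minus_divide minus_diff_eq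
  by (simp_all only: minus_add_distrib powr_diff)

lemma alpha_powr: "alpha q = (q powr (1/2) + 1 / q powr (1/2)) / 2"
proof -
  have "(-1/2::real) = - (1/2)" by simp
  then show ?thesis unfolding alpha_def by (simp only: powr_minus_divide)
qed

lemma xq_shift_sum:
  assumes "0 < q"
  shows "xq q (s + 1/2) + xq q (s - 1/2) = 2 * alpha q * xq q s"
proof -
  define r z where "r = q powr (1/2)" and "z = q powr s"
  have "0 < r" "0 < z" using assms by (simp_all add: r_def z_def)
  then have "(z * r + 1 / (z * r)) / 2 + (z / r + r / z) / 2 = 2 * ((r + 1/r) / 2) * ((z + 1/z) / 2)"
    by (simp add: field_simps)
  then show ?thesis unfolding xq_half_shifts xq_powr[of q s] alpha_powr r_def z_def .
qed

lemma xq_shift_diff: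
  assumes "0 < q"
  shows "xq q (s + 1/2) - xq q (s - 1/2)
    = (q powr (1/2) - 1 / q powr (1/2)) * (q powr s - 1 / q powr s) / 2"
proof -
  define r z where "r = q powr (1/2)" and "z = q powr s"
  have "0 < r" "0 < z" using assms by (simp_all add: r_def z_def)
  then have "(z * r + 1 / (z * r)) / 2 - (z / r + r / z) / 2 = (r - 1/r) * (z - 1/z) / 2"
    by (simp add: field_simps)
  then show ?thesis unfolding xq_half_shifts r_def z_def .
qed

lemma xq_shift_diff_squared:
  assumes "0 < q"
  shows "(xq q (s + 1/2) - xq q (s - 1/2))\<^sup>2 = 4 * ((alpha q)\<^sup>2 - 1) * ((xq q s)\<^sup>2 - 1)"
proof -
  define r z where "r = q powr (1/2)" and "z = q powr s"
  have "0 < r" "0 < z" using assms by (simp_all add: r_def z_def)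
  then have "((r - 1/r) * (z - 1/z) / 2)\<^sup>2 = 4 * (((r + 1/r) / 2)\<^sup>2 - 1) * (((z + 1/z) / 2)\<^sup>2 - 1)"
    by (simp add: field_simps power2_eq_square)
  then show ?thesis unfolding xq_shift_diff[OF assms] alpha_powr xq_powr[of q s] r_def z_def .
qed

lemma sub_inverse_nonzero: "0 < (r::real) \<Longrightarrow> r \<noteq> 1 \<Longrightarrow> r - 1 / r \<noteq> 0"
  by (auto simp: field_simps power2_eq_square[symmetric] power2_eq_1_iff)

lemma xq_shift_diff_nonzero:
  assumes "0 < q" "q \<noteq> 1" "s \<noteq> 0"
  shows "xq q (s + 1/2) \<noteq> xq q (s - 1/2)"
proof -
  have "q powr (1/2) - 1 / q powr (1/2) \<noteq> 0" "q powr s - 1 / q powr s \<noteq> 0"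
    by (rule sub_inverse_nonzero; use assms in simp)+
  then have "xq q (s + 1/2) - xq q (s - 1/2) \<noteq> 0"
    unfolding xq_shift_diff[OF assms(1)] by simp
  then show ?thesis by simp
qed

lemma xq_inj_on_nonneg:
  assumes "0 < q" "q \<noteq> 1"
  shows "inj_on (xq q) {0..}"
proof (rule inj_onI)
  fix s s' assume s: "s \<in> {0..}" "s' \<in> {0..}" and eq: "xq q s = xq q s'"
  define z w where "z = q powr s" and "w = q powr s'"
  have pos: "0 < z" "0 < w" using assms by (simp_all add: z_def w_def)
  have "(z - w) * (z * w - 1) = 0"
    using eq pos unfolding xq_powr z_def[symmetric] w_def[symmetric] by (simp add: field_simps)
  then consider "z = w" | "z * w = 1" by auto
  then show "s = s'"
  proof cases
    case 1
    then show ?thesis using assms by (simp add: z_def w_def powr_inj)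
  next
    case 2
    then have "q powr (s + s') = 1" by (simp add: z_def w_def powr_add)
    then show ?thesis using assms s by simp
  qed
qed

lemma poly_eq_on_grid:
  assumes "0 < q" "q \<noteq> 1" and eq: "\<And>s. 0 < s \<Longrightarrow> poly p (xc q s) = poly r (xc q s)"
  shows "p = r"
proof (rule ccontr)
  assume "p \<noteq> r"
  then have "finite {y. poly (p - r) y = 0}" by (intro poly_roots_finite) simp
  moreover have "complex_of_real ` xq q ` {0<..} \<subseteq> {y. poly (p - r) y = 0}"
    using eq by auto
  moreover have "inj_on (complex_of_real \<circ> xq q) {0<..}"
    using xq_inj_on_nonneg[OF assms(1,2)] inj_of_real
    by (auto intro!: comp_inj_on inj_on_subset[of _ "{0..}"] simp: inj_on_def)
  then have "infinite ((complex_of_real \<circ> xq q) ` {0<..})"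
    using finite_imageD infinite_Ioi by blast
  then have "infinite (complex_of_real ` xq q ` {0<..})"
    by (simp add: image_comp)
  ultimately show False by (meson finite_subset)
qed

definition is_Sq :: "real \<Rightarrow> complex poly \<Rightarrow> complex poly \<Rightarrow> bool" where
  "is_Sq q f g \<longleftrightarrow>
     (\<forall>s. poly g (xc q s) = (poly f (xc q (s + 1/2)) + poly f (xc q (s - 1/2))) / 2)"

definition is_Dq :: "real \<Rightarrow> complex poly \<Rightarrow> complex poly \<Rightarrow> bool" where
  "is_Dq q f g \<longleftrightarrow>
     (\<forall>s. (xc q (s + 1/2) - xc q (s - 1/2)) * poly g (xc q s)
            = poly f (xc q (s + 1/2)) - poly f (xc q (s - 1/2)))"

lemma Sq_eqI:
  assumes "0 < q" "q \<noteq> 1" "is_Sq q f g"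
  shows "Sq q f = g"
  unfolding Sq_def
proof (rule the_equality)
  show "\<forall>s. poly g (xc q s) = (poly f (xc q (s + 1/2)) + poly f (xc q (s - 1/2))) / 2"
    using assms(3) by (simp add: is_Sq_def)
  fix g' assume "\<forall>s. poly g' (xc q s) = (poly f (xc q (s + 1/2)) + poly f (xc q (s - 1/2))) / 2"
  with assms(3) show "g' = g"
    unfolding is_Sq_def by (intro poly_eq_on_grid[OF assms(1,2)]) metis
qed

lemma Dq_eqI:
  assumes "0 < q" "q \<noteq> 1" "is_Dq q f g"
  shows "Dq q f = g"
  unfolding Dq_def
proof (rule the_equality)
  have quotient: "poly g (xc q s) = (poly f (xc q (s + 1/2)) - poly f (xc q (s - 1/2)))
      / complex_of_real (xq q (s + 1/2) - xq q (s - 1/2))"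
    if "xq q (s + 1/2) \<noteq> xq q (s - 1/2)" for s
  proof -
    have "xc q (s + 1/2) - xc q (s - 1/2) \<noteq> 0" using that by simp
    with assms(3) show ?thesis unfolding is_Dq_def by (simp add: eq_divide_eq mult.commute)
  qed
  then show "\<forall>s. xq q (s + 1/2) \<noteq> xq q (s - 1/2) \<longrightarrow> poly g (xc q s) =
      (poly f (xc q (s + 1/2)) - poly f (xc q (s - 1/2)))
        / complex_of_real (xq q (s + 1/2) - xq q (s - 1/2))"
    by blast
  fix g' assume "\<forall>s. xq q (s + 1/2) \<noteq> xq q (s - 1/2) \<longrightarrow> poly g' (xc q s) =
      (poly f (xc q (s + 1/2)) - poly f (xc q (s - 1/2)))
        / complex_of_real (xq q (s + 1/2) - xq q (s - 1/2))"
  with quotient xq_shift_diff_nonzero[OF assms(1,2)] show "g' = g"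
    by (intro poly_eq_on_grid[OF assms(1,2)]) simp
qed

lemma is_Sq_const: "is_Sq q [:c:] [:c:]"
  and is_Dq_const: "is_Dq q [:c:] 0"
  by (simp_all add: is_Sq_def is_Dq_def)

lemma is_Sq_add: "is_Sq q f g \<Longrightarrow> is_Sq q f' g' \<Longrightarrow> is_Sq q (f + f') (g + g')"
  and is_Dq_add: "is_Dq q f g \<Longrightarrow> is_Dq q f' g' \<Longrightarrow> is_Dq q (f + f') (g + g')"
  by (simp_all add: is_Sq_def is_Dq_def add_divide_distrib distrib_left)

lemma is_Sq_smult: "is_Sq q f g \<Longrightarrow> is_Sq q (smult c f) (smult c g)"
  unfolding is_Sq_def by (simp add: distrib_left[symmetric])

lemma is_Dq_smult: "is_Dq q f g \<Longrightarrow> is_Dq q (smult c f) (smult c g)"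
  unfolding is_Dq_def by (simp add: right_diff_distrib[symmetric] mult.left_commute)

lemma is_Sq_mult_x:
  assumes "0 < q" "is_Sq q f h" "is_Dq q f g"
  shows "is_Sq q ([:0, 1:] * f) (smult (alpha q) ([:0, 1:] * h) + U2 q * g)"
  unfolding is_Sq_def
proof
  fix s
  let ?P = "xc q (s + 1/2)" and ?M = "xc q (s - 1/2)" and ?X = "xc q s"
  have sum: "?P + ?M = 2 * alpha q * ?X"
    using arg_cong[OF xq_shift_sum[OF assms(1)], of complex_of_real] by simp
  have diff: "(?P - ?M)\<^sup>2 = 4 * ((alpha q)\<^sup>2 - 1) * (?X\<^sup>2 - 1)"
    using arg_cong[OF xq_shift_diff_squared[OF assms(1)], of complex_of_real] by simp
  have "poly h ?X = (poly f ?P + poly f ?M) / 2" "(?P - ?M) * poly g ?X = poly f ?P - poly f ?M"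
    using assms(2,3) by (simp_all add: is_Sq_def is_Dq_def)
  with sum diff show "poly (smult (alpha q) ([:0, 1:] * h) + U2 q * g) ?X
      = (poly ([:0, 1:] * f) ?P + poly ([:0, 1:] * f) ?M) / 2"
    by (simp add: U2_def) algebra
qed

lemma is_Dq_mult_x:
  assumes "0 < q" "is_Sq q f h" "is_Dq q f g"
  shows "is_Dq q ([:0, 1:] * f) (smult (alpha q) ([:0, 1:] * g) + h)"
  unfolding is_Dq_def
proof
  fix s
  let ?P = "xc q (s + 1/2)" and ?M = "xc q (s - 1/2)" and ?X = "xc q s"
  have sum: "?P + ?M = 2 * alpha q * ?X"
    using arg_cong[OF xq_shift_sum[OF assms(1)], of complex_of_real] by simp
  have "poly h ?X = (poly f ?P + poly f ?M) / 2" "(?P - ?M) * poly g ?X = poly f ?P - poly f ?M"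
    using assms(2,3) by (simp_all add: is_Sq_def is_Dq_def)
  with sum show "(?P - ?M) * poly (smult (alpha q) ([:0, 1:] * g) + h) ?X
      = poly ([:0, 1:] * f) ?P - poly ([:0, 1:] * f) ?M"
    by simp algebra
qed

lemma grid_operators_exist:
  assumes "0 < q"
  shows "\<exists>g h. is_Dq q f g \<and> is_Sq q f h"
proof (induction f)
  case 0
  show ?case using is_Dq_const[of q 0] is_Sq_const[of q 0] by auto
next
  case (pCons a f)
  then obtain g h where "is_Dq q f g" "is_Sq q f h" by blast
  then have "is_Dq q ([:a:] + [:0, 1:] * f) (0 + (smult (alpha q) ([:0, 1:] * g) + h))"
    "is_Sq q ([:a:] + [:0, 1:] * f) ([:a:] + (smult (alpha q) ([:0, 1:] * h) + U2 q * g))"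
    by (simp_all only: is_Dq_add is_Sq_add is_Dq_const is_Sq_const is_Dq_mult_x is_Sq_mult_x assms)
  moreover have "pCons a f = [:a:] + [:0, 1:] * f" by simp
  ultimately show ?case by metis
qed

lemma Cn_0: "q \<noteq> 0 \<Longrightarrow> Cn q 0 = 0"
  by (simp add: Cn_def)

lemma x_times_P:
  assumes "0 \<le> j"
  shows "[:0, 1:] * P q j = P q (j + 1) + smult (Cn q j) (P q (j - 1))"
proof -
  obtain m where m: "j = int m" using assms nonneg_eq_int by blast
  show ?thesis
  proof (cases m)
    case 0
    then show ?thesis using m by (simp add: P_def)
  next
    case (Suc k)
    then have "nat (j + 1) = Suc (Suc k)" "nat j = Suc k" "nat (j - 1) = k" "j = int k + 1"
      using m by auto
    then show ?thesis using m by (simp add: P_def)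
  qed
qed

text \<open>Valid for every integer j: at j = -1 the factor C_0 = 0 absorbs the failure of the
  recurrence.\<close>

lemma Cn_x_times_P:
  assumes "q \<noteq> 0"
  shows "smult (Cn q (j + 1)) ([:0, 1:] * P q j)
    = smult (Cn q (j + 1)) (P q (j + 1) + smult (Cn q j) (P q (j - 1)))"
proof -
  consider "0 \<le> j" | "j = -1" | "j < -1" by linarith
  then show ?thesis
  proof cases
    case 1
    then show ?thesis by (simp only: x_times_P)
  qed (simp_all add: Cn_0 assms P_def)
qed

definition Sq_P_expansion :: "real \<Rightarrow> int \<Rightarrow> complex poly" where
  "Sq_P_expansion q n = smult (alphan q n) (P q n) + smult (bn q n * Cn q (n - 1)) (P q (n - 2))"

definition U2_Dq_P_expansion :: "real \<Rightarrow> int \<Rightarrow> complex poly" where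
  "U2_Dq_P_expansion q n = smult (an q n) (P q (n + 1)) + smult (cn q n) (P q (n - 1))
     + smult (dn q n) (P q (n - 3))"

lemma powr_half_eq_sqrt_powi: "0 < q \<Longrightarrow> q powr (real_of_int m / 2) = sqrt q powi m"
proof -
  assume q: "0 < q"
  have "q powr (real_of_int m / 2) = (q powr (1/2)) powr real_of_int m"
    by (simp add: powr_powr)
  also have "\<dots> = sqrt q powi m" using q by (simp add: powr_half_sqrt powr_real_of_int')
  finally show ?thesis .
qed

text \<open>With Q = sqrt q, t = Q^n and e = (-1)^n, every coefficient with index near n is a
  polynomial in Q, 1/Q, t, 1/t, e and 1/2. Naming the inverses R, u and h = 1/2 turns each
  identity between such coefficients into a polynomial identity modulo QR = tu = e^2 = 2h = 1,
  which the method algebra decides.\<close>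

locale coefficients_at =
  fixes q :: real and n :: int
  assumes q_pos: "0 < q" and q_neq_1: "q \<noteq> 1"
begin

definition "Q = sqrt q"
definition "R = 1 / Q"
definition "t = Q powi n"
definition "u = 1 / t"
definition "e = (-1::real) powi n"
definition "h = (1/2::real)"

lemma Q_pos: "0 < Q" and t_pos: "0 < t"
  using q_pos by (simp_all add: Q_def t_def)

lemma Q_R_inverse: "Q * R = 1" and t_u_inverse: "t * u = 1"
  and e_sign: "e * e = 1" and h_half: "2 * h = 1"
  using Q_pos t_pos by (simp_all add: R_def u_def e_def h_def flip: power_int_add)

lemma powi_shift: "(-1::real) powi m = e * (-1) powi (m - n)" "Q powi m = t * Q powi (m - n)"
  unfolding e_def t_def using Q_pos by (simp_all flip: power_int_add)

lemma q_powr_half: "q powr (real_of_int m / 2) = Q powi m"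
  using powr_half_eq_sqrt_powi[OF q_pos] by (simp add: Q_def)

lemma Cn_eq: "Cn q m = 1/4 * (1 - e * (-1) powi (m-n) * t * Q powi (m-n))
    * (1 - e * (-1) powi (m-n) * t * Q powi (m-n-1))"
proof -
  have "(real_of_int m - 1) / 2 = real_of_int (m - 1) / 2" by simp
  then show ?thesis unfolding Cn_def
    by (simp only: q_powr_half) (simp add: powi_shift[of m] powi_shift[of "m-1"] algebra_simps)
qed

lemma bn_eq: "bn q m = -1/2 * (1 - e * (-1) powi (m-n) * t * Q powi (m-n))
    * (e * (-1) powi (m-n) - Q powi (1-(m-n)) / t)"
proof -
  have "- (real_of_int m - 1) / 2 = real_of_int (1 - m) / 2" by simp
  moreover have "Q powi (1 - m) = Q powi (1 - (m - n)) / t"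
    unfolding t_def using Q_pos by (simp add: power_int_diff)
  ultimately show ?thesis unfolding bn_def
    by (simp only: q_powr_half) (simp add: powi_shift[of m] algebra_simps)
qed

lemma alphan_eq: "alphan q m = (t * Q powi (m-n) + u * Q powi (n-m)) / 2"
proof -
  have "- real_of_int m / 2 = real_of_int (-m) / 2" by simp
  then show ?thesis unfolding alphan_def u_def t_def using Q_pos
    by (simp only: q_powr_half) (simp add: power_int_minus power_int_diff field_simps)
qed

lemma alpha_eq: "alpha q = (Q + R) * h"
  using q_pos by (simp add: h_def alpha_def Q_def R_def powr_half_sqrt powr_minus_divide)

lemma an_eq: "an q m = (Q - R) * (t * Q powi (m-n) - u * Q powi (n-m)) / 4"
proof -
  have "- real_of_int m / 2 = real_of_int (-m) / 2" by simp
  moreover have "q powr (1/2) = Q" "q powr (-1/2) = R"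
    using q_pos by (simp_all add: Q_def R_def powr_half_sqrt powr_minus_divide)
  moreover have "Q * Q \<noteq> 1" using q_pos q_neq_1 by (simp add: Q_def)
  ultimately show ?thesis unfolding an_def gamman_def alpha_eq h_def u_def t_def R_def using Q_pos
    by (simp only: q_powr_half) (simp add: power_int_minus power_int_diff field_simps power2_eq_square)
qed

lemma values_near_n:
  "Cn q (n - 2) = (1 - e*t*R^2)*(1 - e*t*R^3)*h*h"
  "Cn q (n - 1) = (1 + e*t*R)*(1 + e*t*R^2)*h*h"
  "Cn q n = (1 - e*t)*(1 - e*t*R)*h*h"
  "Cn q (n + 1) = (1 + e*t*Q)*(1 + e*t)*h*h"
  "bn q (n - 2) = - (1 - e*t*R^2)*(e - u*Q^3)*h"
  "bn q (n - 1) = (1 + e*t*R)*(e + u*Q^2)*h"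
  "bn q n = - (1 - e*t)*(e - u*Q)*h"
  "bn q (n + 1) = (1 + e*t*Q)*(e + u)*h"
  "bn q (n + 2) = - (1 - e*t*Q^2)*(e - u*R)*h"
  "alphan q (n - 1) = (t*R + u*Q)*h"
  "alphan q n = (t + u)*h"
  "alphan q (n + 1) = (t*Q + u*R)*h"
  "an q (n - 1) = (Q - R)*(t*R - u*Q)*h*h"
  "an q n = (Q - R)*(t - u)*h*h"
  "an q (n + 1) = (Q - R)*(t*Q - u*R)*h*h"
  using Q_pos t_pos
  by (simp_all add: Cn_eq bn_eq alphan_eq an_eq R_def u_def h_def power_int_minus power_int_numeral
      field_simps)

lemma cn_eq_an: "cn q m = bn q (m + 1) * Cn q m - alpha q * bn q m * Cn q (m - 1) - an q m * Cn q m"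
  by (simp add: cn_def an_def)

lemma index_shifts: "n - 1 + 1 = n" "n - 1 - 1 = n - 2" "n - 1 - 2 = n - 3" "n + 1 - 1 = n"
  "n + 1 + 1 = n + 2" "n + 1 - 2 = n - 1" "n - 2 - 1 = n - 3" "n + 1 - 3 = n - 2"
  by simp_all

lemmas coefficients_near_n = cn_eq_an dn_def index_shifts values_near_n alpha_eq

lemma alphan_succ: "alphan q (n + 1) = alpha q * alphan q n + an q n"
  unfolding coefficients_near_n using Q_R_inverse t_u_inverse h_half by algebra

lemma alphan_pred: "alphan q (n - 1) = alpha q * alphan q n - an q n"
  unfolding coefficients_near_n using Q_R_inverse t_u_inverse h_half by algebra

lemma an_succ: "an q (n + 1) = alpha q * an q n + ((alpha q)\<^sup>2 - 1) * alphan q n"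
  unfolding coefficients_near_n using Q_R_inverse t_u_inverse h_half by algebra

lemma cn_succ: "cn q (n + 1) = alpha q * an q n * Cn q (n + 1) + alpha q * cn q n
    + ((alpha q)\<^sup>2 - 1) * alphan q n * (Cn q (n + 1) + Cn q n - 1)
    + ((alpha q)\<^sup>2 - 1) * bn q n * Cn q (n - 1) - Cn q n * an q (n - 1)"
  unfolding coefficients_near_n using Q_R_inverse t_u_inverse e_sign h_half by algebra

lemma dn_succ: "dn q (n + 1) = alpha q * cn q n * Cn q (n - 1) + alpha q * dn q n
    + ((alpha q)\<^sup>2 - 1) * (alphan q n * Cn q n * Cn q (n - 1)
        + bn q n * Cn q (n - 1) * (Cn q (n - 1) + Cn q (n - 2) - 1))
    - Cn q n * cn q (n - 1)"
  unfolding coefficients_near_n using Q_R_inverse t_u_inverse e_sign h_half by algebra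

lemma bn_Cn_relation: "bn q n * Cn q (n - 1) * Cn q (n - 2) + bn q (n - 2) * Cn q n * Cn q (n - 1)
    = 2 * alpha q * bn q (n - 1) * Cn q n * Cn q (n - 2)"
  unfolding coefficients_near_n using Q_R_inverse t_u_inverse e_sign h_half by algebra

lemma Sq_P_expansion_succ:
  assumes "1 \<le> n"
  shows "smult (alpha q) ([:0, 1:] * Sq_P_expansion q n) + U2_Dq_P_expansion q n
           - smult (Cn q n) (Sq_P_expansion q (n - 1)) = Sq_P_expansion q (n + 1)"
proof (rule poly_ext)
  fix y :: complex
  have at_y: "poly f y = poly g y" if "f = g" for f g using that by simp
  have complexified: "complex_of_real a = complex_of_real b" if "a = b" for a b using that by simp
  show "poly (smult (alpha q) ([:0, 1:] * Sq_P_expansion q n) + U2_Dq_P_expansion q n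
           - smult (Cn q n) (Sq_P_expansion q (n - 1))) y = poly (Sq_P_expansion q (n + 1)) y"
    using x_times_P[of n q, THEN at_y] Cn_x_times_P[of q "n - 2", THEN at_y]
      alphan_succ[THEN complexified] alphan_pred[THEN complexified]
      cn_eq_an[of n, THEN complexified] dn_def[of q n, THEN complexified] assms q_pos
    unfolding Sq_P_expansion_def U2_Dq_P_expansion_def
    by (simp add: algebra_simps) algebra
qed

lemma U2_Dq_P_expansion_succ:
  assumes "1 \<le> n"
  shows "smult (alpha q) ([:0, 1:] * U2_Dq_P_expansion q n) + U2 q * Sq_P_expansion q n
           - smult (Cn q n) (U2_Dq_P_expansion q (n - 1)) = U2_Dq_P_expansion q (n + 1)"
proof (rule poly_ext)
  fix y :: complex
  have at_y: "poly f y = poly g y" if "f = g" for f g using that by simp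
  have complexified: "complex_of_real a = complex_of_real b" if "a = b" for a b using that by simp
  show "poly (smult (alpha q) ([:0, 1:] * U2_Dq_P_expansion q n) + U2 q * Sq_P_expansion q n
           - smult (Cn q n) (U2_Dq_P_expansion q (n - 1))) y = poly (U2_Dq_P_expansion q (n + 1)) y"
    using x_times_P[of n q, THEN at_y] x_times_P[of "n + 1" q, THEN at_y]
      x_times_P[of "n - 1" q, THEN at_y]
      Cn_x_times_P[of q "n - 2", THEN at_y] Cn_x_times_P[of q "n - 3", THEN at_y]
      an_succ[THEN complexified] cn_succ[THEN complexified] dn_succ[THEN complexified]
      dn_def[of q n, THEN complexified] dn_def[of q "n - 1", THEN complexified]
      bn_Cn_relation[THEN complexified] assms q_pos
    unfolding Sq_P_expansion_def U2_Dq_P_expansion_def U2_def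
    by (simp add: algebra_simps) algebra
qed

end

lemma alphan_0: "q \<noteq> 0 \<Longrightarrow> alphan q 0 = 1"
  and alphan_1: "alphan q 1 = alpha q"
  and an_0: "an q 0 = 0"
  by (simp_all add: alphan_def alpha_def an_def gamman_def)

lemma an_1:
  assumes "0 < q" "q \<noteq> 1"
  shows "an q 1 = (alpha q)\<^sup>2 - 1"
proof -
  have "q powr (1/2) \<noteq> q powr (-1/2)" using assms by (simp add: powr_inj)
  then show ?thesis by (simp add: an_def gamman_def)
qed

lemma cn_1:
  assumes "0 < q" "q \<noteq> 1"
  shows "cn q 1 = ((alpha q)\<^sup>2 - 1) * (Cn q 1 - 1)"
proof -
  interpret coefficients_at q 1 using assms by unfold_locales
  have "e = -1" "t = Q" "u = R" by (simp_all add: e_def t_def u_def R_def)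
  then show ?thesis
    unfolding cn_eq_an index_shifts values_near_n alpha_eq using Q_R_inverse h_half by algebra
qed

lemma is_Sq_Sq: "0 < q \<Longrightarrow> q \<noteq> 1 \<Longrightarrow> is_Sq q f (Sq q f)"
  using grid_operators_exist Sq_eqI by metis

lemma is_Dq_Dq: "0 < q \<Longrightarrow> q \<noteq> 1 \<Longrightarrow> is_Dq q f (Dq q f)"
  using grid_operators_exist Dq_eqI by metis

context
  fixes q :: real
  assumes q_pos: "0 < q" and q_neq_1: "q \<noteq> 1"
begin

lemma Sq_const: "Sq q [:c:] = [:c:]"
  by (intro Sq_eqI q_pos q_neq_1 is_Sq_const)

lemma Dq_const: "Dq q [:c:] = 0"
  by (intro Dq_eqI q_pos q_neq_1 is_Dq_const)

lemma Sq_smult: "Sq q (smult c f) = smult c (Sq q f)"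
  by (intro Sq_eqI q_pos q_neq_1 is_Sq_smult is_Sq_Sq)

lemma Dq_smult: "Dq q (smult c f) = smult c (Dq q f)"
  by (intro Dq_eqI q_pos q_neq_1 is_Dq_smult is_Dq_Dq)

lemma Sq_add: "Sq q (f + g) = Sq q f + Sq q g"
  by (intro Sq_eqI q_pos q_neq_1 is_Sq_add is_Sq_Sq)

lemma Dq_add: "Dq q (f + g) = Dq q f + Dq q g"
  by (intro Dq_eqI q_pos q_neq_1 is_Dq_add is_Dq_Dq)

lemma Sq_diff: "Sq q (f - g) = Sq q f - Sq q g"
  using Sq_add[of f "smult (-1) g"] Sq_smult[of "-1" g] by simp

lemma Dq_diff: "Dq q (f - g) = Dq q f - Dq q g"
  using Dq_add[of f "smult (-1) g"] Dq_smult[of "-1" g] by simp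

lemma Sq_mult_x: "Sq q ([:0, 1:] * f) = smult (alpha q) ([:0, 1:] * Sq q f) + U2 q * Dq q f"
  by (intro Sq_eqI q_pos q_neq_1 is_Sq_mult_x is_Sq_Sq is_Dq_Dq)

lemma Dq_mult_x: "Dq q ([:0, 1:] * f) = smult (alpha q) ([:0, 1:] * Dq q f) + Sq q f"
  by (intro Dq_eqI q_pos q_neq_1 is_Dq_mult_x is_Sq_Sq is_Dq_Dq)

lemma Sq_P_succ:
  assumes "0 \<le> n"
  shows "Sq q (P q (n + 1)) = smult (alpha q) ([:0, 1:] * Sq q (P q n)) + U2 q * Dq q (P q n)
    - smult (Cn q n) (Sq q (P q (n - 1)))"
proof -
  have "P q (n + 1) = [:0, 1:] * P q n - smult (Cn q n) (P q (n - 1))"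
    using x_times_P[OF assms, of q] by simp
  then show ?thesis
    by (simp only: Sq_diff Sq_smult Sq_mult_x)
qed

lemma U2_Dq_P_succ:
  assumes "0 \<le> n"
  shows "U2 q * Dq q (P q (n + 1)) = smult (alpha q) ([:0, 1:] * (U2 q * Dq q (P q n)))
    + U2 q * Sq q (P q n) - smult (Cn q n) (U2 q * Dq q (P q (n - 1)))"
proof -
  have "P q (n + 1) = [:0, 1:] * P q n - smult (Cn q n) (P q (n - 1))"
    using x_times_P[OF assms, of q] by simp
  then show ?thesis
    by (simp only: Dq_diff Dq_smult Dq_mult_x)
      (simp add: algebra_simps)
qed

lemma Sq_U2_Dq_P_0:
  "Sq q (P q 0) = Sq_P_expansion q 0 \<and> U2 q * Dq q (P q 0) = U2_Dq_P_expansion q 0"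
  using Sq_const[of 1] Dq_const[of 1] q_pos
  by (simp add: P_def Sq_P_expansion_def U2_Dq_P_expansion_def alphan_0 an_0 one_pCons)

lemma Sq_U2_Dq_P_1:
  "Sq q (P q 1) = Sq_P_expansion q 1 \<and> U2 q * Dq q (P q 1) = U2_Dq_P_expansion q 1"
proof -
  have P1: "P q 1 = [:0, 1:] * 1" by (simp add: P_def)
  have S1: "Sq q 1 = 1" and D1: "Dq q 1 = 0"
    using Sq_const[of 1] Dq_const[of 1] by (simp_all add: one_pCons)
  have "Sq q (P q 1) = smult (alpha q) [:0, 1:]"
    unfolding P1 Sq_mult_x S1 D1 by simp
  moreover have "U2 q * Dq q (P q 1) = U2 q"
    unfolding P1 Dq_mult_x S1 D1 by simp
  moreover have "P q 2 = [:0, 1:] * [:0, 1:] - smult (Cn q 1) 1"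
    by (simp add: P_def numeral_2_eq_2)
  ultimately show ?thesis
    by (simp add: Sq_P_expansion_def U2_Dq_P_expansion_def alphan_1 an_1 cn_1 q_pos q_neq_1 Cn_0
        U2_def P_def algebra_simps)
qed

lemma Sq_U2_Dq_P:
  assumes "0 \<le> n"
  shows "Sq q (P q n) = Sq_P_expansion q n \<and> U2 q * Dq q (P q n) = U2_Dq_P_expansion q n"
proof -
  have "(Sq q (P q k) = Sq_P_expansion q k \<and> U2 q * Dq q (P q k) = U2_Dq_P_expansion q k)
    \<and> (Sq q (P q (k + 1)) = Sq_P_expansion q (k + 1)
       \<and> U2 q * Dq q (P q (k + 1)) = U2_Dq_P_expansion q (k + 1))"
    if "k = int m" for k m
    using that
  proof (induction m arbitrary: k)
    case 0
    then show ?case using Sq_U2_Dq_P_0 Sq_U2_Dq_P_1 by simp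
  next
    case (Suc m)
    then have k: "1 \<le> k" "k - 1 = int m" "int m + 1 = k" by simp_all
    from Suc.IH[OF refl] have IH: "Sq q (P q (k - 1)) = Sq_P_expansion q (k - 1)"
      "U2 q * Dq q (P q (k - 1)) = U2_Dq_P_expansion q (k - 1)"
      "Sq q (P q k) = Sq_P_expansion q k" "U2 q * Dq q (P q k) = U2_Dq_P_expansion q k"
      unfolding k by simp_all
    interpret coefficients_at q k using q_pos q_neq_1 by unfold_locales
    have "Sq q (P q (k + 1)) = Sq_P_expansion q (k + 1)"
      using Sq_P_succ[of k] Sq_P_expansion_succ k(1) by (simp only: IH)
    moreover have "U2 q * Dq q (P q (k + 1)) = U2_Dq_P_expansion q (k + 1)"
      using U2_Dq_P_succ[of k] U2_Dq_P_expansion_succ k(1) by (simp only: IH)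
    ultimately show ?case using IH by simp
  qed
  then show ?thesis using assms by (metis nonneg_eq_int)
qed

end

theorem mainTheorem5:
  fixes q :: real and n :: int
  assumes "0 < q" and "q < 1" and "n \<ge> 1"
  shows "Sq q (P q n) = smult (complex_of_real (alphan q n)) (P q n)
                        + smult (complex_of_real (bn q n * Cn q (n - 1))) (P q (n - 2))
         \<and> U2 q * Dq q (P q n) = smult (complex_of_real (an q n)) (P q (n + 1))
                        + smult (complex_of_real (cn q n)) (P q (n - 1))
                        + smult (complex_of_real (dn q n)) (P q (n - 3))"
  using Sq_U2_Dq_P[of q n] assms unfolding Sq_P_expansion_def U2_Dq_P_expansion_def by simp

end
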